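(* Suppose $\mu_W = \mathbf{0}_{m \times k}$ (exogenous treatment). Then: (1) The model is invariant: $m_\mathcal{Z}(g,(Y^*,W^* )) \sim \mathbb{P}_{m_\Theta(g,\theta)}$ for all $g \in G$ and all $\theta \in \Theta$. (2) The loss is invariant: $L(m_\Theta(g,\theta),m_\mathcal{A}(g,a)) = L(\theta,a)$ for all $g \in G$, $\theta \in \Theta$, $a \in \mathcal{A}$.
   Context: Linear regression $Y_i = \alpha + X_i'\beta + W_i'\gamma + U_i$ with $n$ iid observations, regressors of interest $X_i \in \mathbb{R}^m$, controls $W_i \in \mathbb{R}^k$, homoscedastic Normal noise with variance $\sigma^2$. Condition on $X = x$ throughout. Let $q_x \in \mathbb{R}^{n\times m}$ and $q_\perp \in \mathbb{R}^{n \times s}$, $s = n-m-1$, be such that $(\mathbf{1}/\sqrt{n}, q_x, q_\perp)$ is an orthonormal $n\times n$ matrix and the columns of $(\mathbf{1},x)$ lie in the span of $(\mathbf{1}/\sqrt n, q_x)$. Write $W^*_x = q_x'W$, $W^*_\perp = q_\perp'W$, $Y^*_x = q_x'Y$, $Y^*_\perp = q_\perp'Y$. Assume the joint distribution $W^*_x = \mu_W + V_W^{(x)}\Sigma_W^{1/2}$, $W^*_\perp = V_W^{(\perp)}\Sigma_W^{1/2}$, where $V_W = (V_W^{(x)}; V_W^{(\perp)})$ has iid $\mathcal{N}(0,1)$ entries, and $Y^*_x = \mu_x + W^*_x\gamma + \text{noise}$, $Y^*_\perp = W^*_\perp\gamma + \text{noise}$, with the noise vector independent of $V_W$ and iid Normal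 with mean zero and variance $\sigma^2$ (scaled standard Normals $V_Y$). Here $\Sigma_W \in \mathbb{R}^{k\times k}$ is symmetric positive definite with symmetric positive-definite square root $\Sigma_W^{1/2}$, $\mu_x = q_x'x\beta \in \mathbb{R}^m$, $\mu_W = q_x'x\beta_W \in \mathbb{R}^{m\times k}$ (with $\beta_W$ the coefficient of $x$ in the conditional mean of $W$ given $X$). Sample space $\mathcal{Z} = \mathbb{R}^{m+s}\times\mathbb{R}^{(m+s)\times k}$, parameter $\theta = (\mu_x,\gamma) \in \Theta = \mathbb{R}^m\times\mathbb{R}^k$ (with $\sigma^2,\Sigma_W,\mu_W$ treated as known constants), and $\mathbb{P}_\theta$ is the distribution of $(Y^*,W^* )$. Action space $\mathcal{A} = \mathbb{R}^m$, loss $L(\theta,a) = \|\mu_x - a\|^2$. Group $G = \mathbb{R}^m \times O(m)\times O(k)\times O(s)$ (addition on $\mathbb{R}^m$, matrix multiplication on orthogonal groups), elements $g = (g_\mu,g_x,g_W,g_\perp)$, acting by $m_\mathcal{Z}(g,(y_x,y_\perp,w_x,w_\perp)) = (g_x y_x + g_\mu,\ g_\perp y_\perp,\ g_x w_x\Sigma_W^{-1/2}g_W'\Sigma_W^{1/2},\ g_\perp w_\perp\Sigma_W^{-1/2}g_W'\Sigma_W^{1/2})$, $m_\Theta(g,(\mu_x,\gamma)) = (g_x\mu_x + g_\mu,\ \Sigma_W^{-1/2}g_W\Sigma_W^{1/2}\gamma)$, $m_\mathcal{A}(g,a) = g_x a + g_\mu$. *)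

theory Defs
  imports "HOL-Analysis.Analysis" "HOL-Probability.Probability"
begin

definition std_normal_M :: "real measure" where
  "std_normal_M = density lborel std_normal_density"

text \<open>Underlying iid standard normal variables: index type
  ('m x 'k) + ('s x 'k) + 'm + 's, i.e. V_W^(x), V_W^(perp), V_Y^(x), V_Y^(perp).\<close>
definition noise_M :: "(('m::finite \<times> 'k::finite) + ('s::finite \<times> 'k) + 'm + 's \<Rightarrow> real) measure" where
  "noise_M = PiM UNIV (\<lambda>_. std_normal_M)"

definition pos_def_matrix :: "(real^'k^'k) \<Rightarrow> bool" where
  "pos_def_matrix A \<longleftrightarrow> transpose A = A \<and> (\<forall>v. v \<noteq> 0 \<longrightarrow> v \<bullet> (A *v v) > 0)"

text \<open>The data-generating map: noise variables to (Y*_x, Y*_perp, W*_x, W*_perp).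
  Matrices are row-indexed: (real^'k^'m) is an m x k matrix.\<close>
definition model_map ::
  "real \<Rightarrow> (real^'k^'k) \<Rightarrow> (real^'k^'m) \<Rightarrow> (real^'m) \<times> (real^'k)
   \<Rightarrow> (('m::finite \<times> 'k::finite) + ('s::finite \<times> 'k) + 'm + 's \<Rightarrow> real)
   \<Rightarrow> (real^'m) \<times> (real^'s) \<times> (real^'k^'m) \<times> (real^'k^'s)" where
  "model_map \<sigma> SWh muW \<theta> \<omega> =
    (let mux = fst \<theta>; \<gamma> = snd \<theta>;
         Vx = (\<chi> i j. \<omega> (Inl (i, j))) :: (real^'k^'m);
         Vp = (\<chi> i j. \<omega> (Inr (Inl (i, j)))) :: (real^'k^'s);
         ex = (\<chi> i. \<omega> (Inr (Inr (Inl i)))) :: (real^'m);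
         ep = (\<chi> i. \<omega> (Inr (Inr (Inr i)))) :: (real^'s);
         Wx = muW + Vx ** SWh;
         Wp = Vp ** SWh
     in (mux + Wx *v \<gamma> + \<sigma> *\<^sub>R ex, Wp *v \<gamma> + \<sigma> *\<^sub>R ep, Wx, Wp))"

definition model_P ::
  "real \<Rightarrow> (real^'k^'k) \<Rightarrow> (real^'k^'m) \<Rightarrow> (real^'m) \<times> (real^'k)
   \<Rightarrow> ((real^'m::finite) \<times> (real^'s::finite) \<times> (real^'k::finite^'m) \<times> (real^'k^'s)) measure" where
  "model_P \<sigma> SWh muW \<theta> = distr noise_M borel (model_map \<sigma> SWh muW \<theta>)"

definition in_G :: "(real^'m) \<times> (real^'m^'m) \<times> (real^'k^'k) \<times> (real^'s^'s) \<Rightarrow> bool" where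
  "in_G g \<longleftrightarrow> (case g of (g\<mu>, gx, gW, gp) \<Rightarrow>
     orthogonal_matrix gx \<and> orthogonal_matrix gW \<and> orthogonal_matrix gp)"

definition m_Z ::
  "(real^'k^'k) \<Rightarrow> (real^'m) \<times> (real^'m^'m) \<times> (real^'k^'k) \<times> (real^'s^'s)
   \<Rightarrow> (real^'m) \<times> (real^'s) \<times> (real^'k^'m) \<times> (real^'k^'s)
   \<Rightarrow> (real^'m) \<times> (real^'s) \<times> (real^'k^'m) \<times> (real^'k^'s)" where
  "m_Z SWh g z = (case g of (g\<mu>, gx, gW, gp) \<Rightarrow> case z of (yx, yp, wx, wp) \<Rightarrow>
     (gx *v yx + g\<mu>, gp *v yp,
      gx ** wx ** matrix_inv SWh ** transpose gW ** SWh,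
      gp ** wp ** matrix_inv SWh ** transpose gW ** SWh))"

definition m_Theta ::
  "(real^'k^'k) \<Rightarrow> (real^'m) \<times> (real^'m^'m) \<times> (real^'k^'k) \<times> (real^'s^'s)
   \<Rightarrow> (real^'m) \<times> (real^'k) \<Rightarrow> (real^'m) \<times> (real^'k)" where
  "m_Theta SWh g \<theta> = (case g of (g\<mu>, gx, gW, gp) \<Rightarrow> case \<theta> of (mux, \<gamma>) \<Rightarrow>
     (gx *v mux + g\<mu>, (matrix_inv SWh ** gW ** SWh) *v \<gamma>))"

definition m_A :: "(real^'m) \<times> (real^'m^'m) \<times> (real^'k^'k) \<times> (real^'s^'s) \<Rightarrow> (real^'m) \<Rightarrow> (real^'m)" where
  "m_A g a = (case g of (g\<mu>, gx, gW, gp) \<Rightarrow> gx *v a + g\<mu>)"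

definition loss :: "(real^'m) \<times> (real^'k) \<Rightarrow> (real^'m) \<Rightarrow> real" where
  "loss \<theta> a = (norm (fst \<theta> - a))\<^sup>2"

end

theory Submission
  imports Defs
begin

text \<open>With mu_W = 0 the data (Y*, W*) are the image of iid standard normal noise
  (V_W, V_Y) under a map that is equivariant: acting on the data by g is the same as acting on
  the parameter by g and on the noise by the linear map V_W^(x) |-> g_x V_W^(x) g_W',
  V_W^(perp) |-> g_perp V_W^(perp) g_W', V_Y^(x) |-> g_x V_Y^(x), V_Y^(perp) |-> g_perp V_Y^(perp).
  This noise map preserves the Euclidean (Frobenius) norm, and the standard Gaussian measure is
  invariant under orthogonal maps, since its density depends only on the norm and Lebesgue
  measure is invariant. The loss is invariant because g_x preserves norms.\<close>

section \<open>Vectors and matrices\<close>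

lemma power2_norm_vec: "(norm x)\<^sup>2 = (\<Sum>i\<in>UNIV. (norm (x $ i))\<^sup>2)"
  for x :: "'a::real_normed_vector^'n::finite"
  unfolding norm_vec_def L2_set_def by (simp add: sum_nonneg)

lemma power2_norm_real_vec: "(norm x)\<^sup>2 = (\<Sum>i\<in>UNIV. (x $ i)\<^sup>2)"
  for x :: "real^'n::finite"
  by (simp add: power2_norm_vec)

lemma power2_norm_vec_Plus:
  "(norm (vec_lambda f :: 'c::real_normed_vector^('a::finite + 'b::finite)))\<^sup>2
    = (norm (\<chi> a. f (Inl a)))\<^sup>2 + (norm (\<chi> b. f (Inr b)))\<^sup>2"
  by (simp add: power2_norm_vec UNIV_Plus_UNIV[symmetric] sum.Plus del: UNIV_Plus_UNIV)

lemma power2_norm_vec_prod: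
  "(norm (vec_lambda f :: 'c::real_normed_vector^('a::finite \<times> 'b::finite)))\<^sup>2 = (norm (\<chi> a b. f (a, b)))\<^sup>2"
  by (simp add: power2_norm_vec UNIV_Times_UNIV[symmetric] sum.cartesian_product del: UNIV_Times_UNIV)

lemma matrix_add_rdistrib: "(A + B) ** C = A ** C + B ** C"
  for A B :: "'a::semiring_1^'n::finite^'m::finite" and C :: "'a^'p::finite^'n"
  by (vector matrix_matrix_mult_def sum.distrib[symmetric] field_simps)

lemma bounded_bilinear_matrix_matrix_mult [bounded_bilinear]:
  "bounded_bilinear ((**) :: real^'n::finite^'m::finite \<Rightarrow> real^'p::finite^'n \<Rightarrow> real^'p^'m)"
  unfolding bilinear_conv_bounded_bilinear[symmetric] bilinear_def
  by (auto intro!: linearI simp: matrix_add_ldistrib matrix_add_rdistrib matrix_scalar_ac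
      scalar_matrix_assoc[symmetric])

lemma bounded_bilinear_matrix_vector_mult [bounded_bilinear]:
  "bounded_bilinear ((*v) :: real^'n::finite^'m::finite \<Rightarrow> real^'n \<Rightarrow> real^'m)"
  unfolding bilinear_conv_bounded_bilinear[symmetric] bilinear_def
  by (auto intro!: linearI simp: matrix_vector_right_distrib matrix_vector_mult_add_rdistrib
      matrix_vector_mult_scaleR vec_eq_iff matrix_vector_mult_def sum_distrib_left mult.assoc
      sum.distrib distrib_right)

lemma norm_transpose: "norm (transpose A) = norm A"
  for A :: "real^'n::finite^'m::finite"
proof -
  have "(norm (transpose A))\<^sup>2 = (norm A)\<^sup>2"
    by (simp add: power2_norm_vec transpose_def sum.swap[of _ "UNIV :: 'm set"])
  then show ?thesis
    by (simp add: power2_eq_iff_nonneg)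
qed

lemma norm_orthogonal_matrix_vector_mult: "orthogonal_matrix Q \<Longrightarrow> norm (Q *v x) = norm x"
  for Q :: "real^'n::finite^'n"
  using orthogonal_transformation_matrix[of "(*v) Q"] by (simp add: orthogonal_transformation_norm)

lemma norm_matrix_mult_transpose_orthogonal:
  fixes A :: "real^'n::finite^'m::finite" and R :: "real^'n^'n"
  assumes "orthogonal_matrix R"
  shows "norm (A ** transpose R) = norm A"
proof -
  have "(A ** transpose R) $ i = R *v (A $ i)" for i
    by (simp add: vec_eq_iff matrix_matrix_mult_def matrix_vector_mult_def transpose_def mult.commute)
  then show ?thesis
    unfolding norm_vec_def[of "A ** transpose R"] norm_vec_def[of A]
    by (simp add: norm_orthogonal_matrix_vector_mult[OF assms])
qed

lemma norm_orthogonal_matrix_mult: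
  fixes A :: "real^'n::finite^'m::finite" and Q :: "real^'m^'m"
  assumes "orthogonal_matrix Q"
  shows "norm (Q ** A) = norm A"
  by (metis assms matrix_transpose_mul norm_matrix_mult_transpose_orthogonal norm_transpose)

lemma matrix_inv_right: "invertible A \<Longrightarrow> A ** matrix_inv A = mat 1"
  unfolding invertible_def matrix_inv_def by (rule someI2_ex) auto

lemma pos_def_matrix_invertible:
  fixes A :: "real^'n::finite^'n"
  assumes "pos_def_matrix A"
  shows "invertible A"
proof -
  have "\<forall>x. A *v x = 0 \<longrightarrow> x = 0"
    using assms unfolding pos_def_matrix_def by (metis inner_zero_right less_irrefl)
  then show ?thesis
    by (simp add: invertible_left_inverse matrix_left_invertible_ker)
qed

section \<open>The standard Gaussian measure\<close>

lemma sets_std_normal_M [simp, measurable_cong]: "sets std_normal_M = sets borel"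
  by (simp add: std_normal_M_def)

lemma prob_space_std_normal_M: "prob_space std_normal_M"
  by (simp add: std_normal_M_def prob_space_normal_density)

lemma indicator_PiE_prod:
  "indicator (PiE I A) x = (\<Prod>i\<in>I. indicator (A i) (x i) :: ennreal)"
  if "finite I" "x \<in> extensional I"
  using that by (auto simp: indicator_def PiE_def Pi_iff)

lemma PiM_density:
  assumes "finite I"
    and "\<And>i. sigma_finite_measure (M i)"
    and "\<And>i. sigma_finite_measure (density (M i) (f i))"
    and f[measurable]: "\<And>i. f i \<in> borel_measurable (M i)"
  shows "PiM I (\<lambda>i. density (M i) (f i)) = density (PiM I M) (\<lambda>x. \<Prod>i\<in>I. f i (x i))"
proof -
  interpret M: product_sigma_finite M
    using assms(2) by (simp add: product_sigma_finite_def)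
  interpret D: product_sigma_finite "\<lambda>i. density (M i) (f i)"
    using assms(3) by (simp add: product_sigma_finite_def)
  have "density (PiM I M) (\<lambda>x. \<Prod>i\<in>I. f i (x i)) = PiM I (\<lambda>i. density (M i) (f i))"
  proof (rule D.PiM_eqI)
    fix A assume A: "\<And>i. i \<in> I \<Longrightarrow> A i \<in> sets (density (M i) (f i))"
    then have PiE_sets: "PiE I A \<in> sets (PiM I M)"
      by (intro sets_PiM_I_finite) (auto simp: \<open>finite I\<close>)
    have "emeasure (density (PiM I M) (\<lambda>x. \<Prod>i\<in>I. f i (x i))) (PiE I A)
        = (\<integral>\<^sup>+ x. (\<Prod>i\<in>I. f i (x i) * indicator (A i) (x i)) \<partial>PiM I M)"
      using PiE_sets \<open>finite I\<close>
      by (auto simp: emeasure_density space_PiM PiE_iff indicator_PiE_prod prod.distrib intro!: nn_integral_cong)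
    also have "\<dots> = (\<Prod>i\<in>I. \<integral>\<^sup>+ y. f i y * indicator (A i) y \<partial>M i)"
      using A \<open>finite I\<close> by (intro M.product_nn_integral_prod) auto
    also have "\<dots> = (\<Prod>i\<in>I. emeasure (density (M i) (f i)) (A i))"
      using A by (intro prod.cong) (auto simp: emeasure_density)
    finally show "emeasure (density (PiM I M) (\<lambda>x. \<Prod>i\<in>I. f i (x i))) (PiE I A)
        = (\<Prod>i\<in>I. emeasure (density (M i) (f i)) (A i))" .
  qed (auto intro!: sets_PiM_cong simp: \<open>finite I\<close>)
  then show ?thesis ..
qed

definition std_gaussian :: "('n::finite \<Rightarrow> real) measure" where
  "std_gaussian = PiM UNIV (\<lambda>_. std_normal_M)"

lemma measurable_vec_lambda_PiM:
  assumes "\<And>i. sets (M i) = sets borel"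
  shows "(vec_lambda :: ('n::finite \<Rightarrow> real) \<Rightarrow> real^'n) \<in> borel_measurable (PiM UNIV M)"
  unfolding borel_measurable_euclidean_space[where f=vec_lambda]
proof
  fix b :: "real^'n"
  assume "b \<in> Basis"
  then obtain i where "b = axis i 1"
    by (auto simp: Basis_vec_def)
  moreover have "(\<lambda>f. f i) \<in> borel_measurable (PiM UNIV M)"
    using measurable_component_singleton[of i UNIV M] by (simp add: measurable_cong_sets[OF refl assms])
  ultimately show "(\<lambda>f. vec_lambda f \<bullet> b) \<in> borel_measurable (PiM UNIV M)"
    by (simp add: inner_axis)
qed

lemma measurable_vec_nth_PiM:
  assumes "\<And>i. sets (M i) = sets borel"
  shows "(vec_nth :: real^'n::finite \<Rightarrow> ('n \<Rightarrow> real)) \<in> borel \<rightarrow>\<^sub>M PiM UNIV M"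
  by (rule measurable_PiM_single')
    (auto simp: measurable_cong_sets[OF refl assms] space_PiM sets_eq_imp_space_eq[OF assms])

lemma linear_borel_measurable:
  fixes h :: "'a::euclidean_space \<Rightarrow> 'b::euclidean_space"
  shows "linear h \<Longrightarrow> h \<in> borel_measurable borel"
  by (intro borel_measurable_continuous_onI linear_continuous_on linear_conv_bounded_linear[THEN iffD1])

lemma distr_PiM_lborel_vec_lambda:
  "distr (PiM UNIV (\<lambda>_. lborel)) borel vec_lambda = (lborel :: (real^'n::finite) measure)"
proof (rule lborel_eqI[symmetric])
  interpret product_sigma_finite "\<lambda>_::'n. lborel"
    by (simp add: product_sigma_finite_def sigma_finite_lborel)
  fix l u :: "real^'n"
  assume le_Basis: "\<And>b. b \<in> Basis \<Longrightarrow> l \<bullet> b \<le> u \<bullet> b"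
  have le: "l $ i \<le> u $ i" for i
    using le_Basis[of "axis i 1"] by (auto simp: inner_axis Basis_vec_def)
  have "vec_lambda -` box l u \<inter> space (PiM UNIV (\<lambda>_::'n. lborel)) = PiE UNIV (\<lambda>i. {l$i<..<u$i})"
    by (auto simp: mem_box_cart space_PiM PiE_def extensional_def Pi_iff)
  then have "emeasure (distr (PiM UNIV (\<lambda>_. lborel)) borel vec_lambda) (box l u)
      = (\<Prod>i\<in>UNIV. emeasure lborel {l$i<..<u$i})"
    by (simp add: emeasure_distr measurable_vec_lambda_PiM emeasure_PiM)
  also have "\<dots> = ennreal (\<Prod>i\<in>UNIV. u$i - l$i)"
    using le by (simp add: prod_ennreal)
  also have "(\<Prod>i\<in>UNIV. u$i - l$i) = (\<Prod>b\<in>Basis. (u - l) \<bullet> b)"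
    by (simp add: Basis_vec_def cart_eq_inner_axis axis_eq_axis prod.UNION_disjoint inner_diff_left)
  finally show "emeasure (distr (PiM UNIV (\<lambda>_. lborel)) borel vec_lambda) (box l u) = (\<Prod>b\<in>Basis. (u - l) \<bullet> b)" .
qed simp

definition std_gaussian_density :: "real^'n::finite \<Rightarrow> real" where
  "std_gaussian_density x = (1 / sqrt (2 * pi)) ^ CARD('n) * exp (- (norm x)\<^sup>2 / 2)"

lemma prod_std_normal_density_vec:
  "(\<Prod>i\<in>UNIV. std_normal_density (x $ i)) = std_gaussian_density x"
proof -
  have "(\<Sum>i\<in>UNIV. - (x $ i)\<^sup>2 / 2) = - (norm x)\<^sup>2 / 2"
    by (simp add: power2_norm_real_vec sum_divide_distrib[symmetric] sum_negf)
  then show ?thesis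
    by (simp only: std_gaussian_density_def std_normal_density_def prod.distrib prod_constant
        exp_sum[OF finite_class.finite_UNIV, symmetric])
qed

lemma distr_std_gaussian_vec_lambda:
  "distr std_gaussian borel vec_lambda = density lborel (\<lambda>x::real^'n::finite. ennreal (std_gaussian_density x))"
proof -
  let ?\<phi> = "\<lambda>x::real^'n. ennreal (std_gaussian_density x)"
  have [measurable]: "?\<phi> \<in> borel_measurable borel"
    unfolding std_gaussian_density_def by measurable
  have "std_gaussian = density (PiM UNIV (\<lambda>_::'n. lborel)) (\<lambda>f. \<Prod>i\<in>UNIV. ennreal (std_normal_density (f i)))"
    unfolding std_gaussian_def std_normal_M_def
    by (rule PiM_density) (auto simp: sigma_finite_lborel prob_space_imp_sigma_finite prob_space_normal_density)
  also have "\<dots> = density (PiM UNIV (\<lambda>_::'n. lborel)) (\<lambda>f. ?\<phi> (vec_lambda f))"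
    by (simp add: prod_ennreal flip: prod_std_normal_density_vec)
  finally have "distr std_gaussian borel vec_lambda
      = distr (density (PiM UNIV (\<lambda>_. lborel)) (\<lambda>f. ?\<phi> (vec_lambda f))) borel vec_lambda"
    by simp
  also have "\<dots> = density (distr (PiM UNIV (\<lambda>_. lborel)) borel vec_lambda) ?\<phi>"
    by (rule density_distr[symmetric]) (auto intro: measurable_vec_lambda_PiM)
  finally show ?thesis
    by (simp add: distr_PiM_lborel_vec_lambda)
qed

lemma distr_lborel_orthogonal_transformation:
  fixes h :: "real^'n::{finite,wellorder} \<Rightarrow> real^'n::{finite,wellorder}"
  assumes h: "orthogonal_transformation h"
  shows "distr lborel borel h = lborel"
proof (rule lborel_eqI[symmetric])
  have h_meas: "h \<in> borel_measurable borel"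
    using h by (simp add: linear_borel_measurable orthogonal_transformation_linear)
  have inv_h: "orthogonal_transformation (inv h)"
    using h by (rule orthogonal_transformation_inv)
  fix l u :: "(real, 'n) vec"
  assume "\<And>b. b \<in> Basis \<Longrightarrow> l \<bullet> b \<le> u \<bullet> b"
  then have box_measure: "emeasure lborel (box l u) = (\<Prod>b\<in>Basis. (u - l) \<bullet> b)"
    by (simp add: emeasure_lborel_box_eq)
  have preimage: "h -` box l u = inv h ` box l u"
    using orthogonal_transformation_bij[OF h] by (rule bij_vimage_eq_inv_image)
  then have "inv h ` box l u \<in> sets borel"
    using h_meas by (metis borel_open measurable_sets_borel open_box)
  then have "emeasure (distr lborel borel h) (box l u) = emeasure lebesgue (inv h ` box l u)"
    using h_meas by (simp add: emeasure_distr preimage)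
  also have "\<dots> = ennreal (measure lebesgue (box l u))"
    using measurable_orthogonal_image[OF inv_h, of "box l u"]
    by (simp add: emeasure_eq_measure2 measure_orthogonal_image[OF inv_h])
  also have "\<dots> = emeasure lborel (box l u)"
    by (simp add: emeasure_eq_measure2)
  finally show "emeasure (distr lborel borel h) (box l u) = (\<Prod>b\<in>Basis. (u - l) \<bullet> b)"
    by (simp add: box_measure)
qed simp

lemma measurable_std_gaussian_linear:
  fixes T :: "('n::finite \<Rightarrow> real) \<Rightarrow> ('n \<Rightarrow> real)"
  assumes "linear (\<lambda>x. vec_lambda (T (vec_nth x)))"
  shows "T \<in> std_gaussian \<rightarrow>\<^sub>M std_gaussian"
proof -
  have "(\<lambda>f. vec_nth (vec_lambda (T (vec_nth (vec_lambda f))))) \<in> std_gaussian \<rightarrow>\<^sub>M std_gaussian"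
    unfolding std_gaussian_def
    by (intro measurable_comp[OF measurable_comp[OF measurable_vec_lambda_PiM linear_borel_measurable[OF assms]]
          measurable_vec_nth_PiM, unfolded comp_def]) simp_all
  then show ?thesis
    by (simp add: vec_lambda_inverse)
qed

lemma std_gaussian_orthogonal_invariant_wellorder:
  fixes T :: "('n::{finite,wellorder} \<Rightarrow> real) \<Rightarrow> ('n \<Rightarrow> real)"
  assumes orth: "orthogonal_transformation (\<lambda>x. vec_lambda (T (vec_nth x)))"
  shows "distr std_gaussian std_gaussian T = std_gaussian"
proof -
  define h where "h x = vec_lambda (T (vec_nth x))" for x :: "(real, 'n) vec"
  let ?\<phi> = "\<lambda>x::(real, 'n) vec. ennreal (std_gaussian_density x)"
  have h_orth: "orthogonal_transformation h"
    using orth by (simp add: h_def[abs_def])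
  have h_meas [measurable]: "h \<in> borel_measurable borel"
    using h_orth by (simp add: linear_borel_measurable orthogonal_transformation_linear)
  have [measurable]: "?\<phi> \<in> borel_measurable borel"
    unfolding std_gaussian_density_def by measurable
  have vec_lambda_meas: "vec_lambda \<in> borel_measurable (std_gaussian :: ('n \<Rightarrow> real) measure)"
    unfolding std_gaussian_def by (rule measurable_vec_lambda_PiM) simp
  have vec_nth_meas: "vec_nth \<in> borel \<rightarrow>\<^sub>M (std_gaussian :: ('n \<Rightarrow> real) measure)"
    unfolding std_gaussian_def by (rule measurable_vec_nth_PiM) simp
  have "density lborel ?\<phi> = density (distr lborel borel h) ?\<phi>"
    using h_orth by (simp add: distr_lborel_orthogonal_transformation)
  also have "\<dots> = distr (density lborel (\<lambda>x. ?\<phi> (h x))) borel h"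
    by (rule density_distr) simp_all
  also have "(\<lambda>x. ?\<phi> (h x)) = ?\<phi>"
    by (simp add: std_gaussian_density_def orthogonal_transformation_norm[OF h_orth])
  finally have density_invariant: "distr (density lborel ?\<phi>) borel h = density lborel ?\<phi>"
    by simp
  have T_eq: "T = (\<lambda>f. vec_nth (h (vec_lambda f)))"
    by (simp add: h_def vec_lambda_inverse)
  have "distr std_gaussian std_gaussian T
      = distr (distr (distr std_gaussian borel vec_lambda) borel h) std_gaussian vec_nth"
    using vec_lambda_meas vec_nth_meas by (simp add: T_eq distr_distr comp_def)
  also have "\<dots> = distr (distr std_gaussian borel vec_lambda) std_gaussian vec_nth"
    by (simp add: distr_std_gaussian_vec_lambda density_invariant)
  also have "\<dots> = std_gaussian"
    using vec_lambda_meas vec_nth_meas by (simp add: distr_distr comp_def vec_lambda_inverse)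
  finally show ?thesis .
qed

lemma orthogonal_transformation_extend_id:
  fixes T :: "('n::finite \<Rightarrow> real) \<Rightarrow> ('n \<Rightarrow> real)" and e :: "'n \<Rightarrow> 'm::finite"
  assumes "inj e" and orth: "orthogonal_transformation (\<lambda>x. vec_lambda (T (vec_nth x)))"
  defines "T' f \<equiv> (\<lambda>b. if b \<in> range e then T (f \<circ> e) (inv e b) else f b)"
  shows "orthogonal_transformation (\<lambda>x. vec_lambda (T' (vec_nth x)))"
proof -
  define h where "h x = vec_lambda (T (vec_nth x))" for x :: "real^'n"
  have h_orth: "orthogonal_transformation h"
    using orth by (simp add: h_def[abs_def])
  have T_eq: "T f = vec_nth (h (vec_lambda f))" for f
    by (simp add: h_def vec_lambda_inverse)
  define restr :: "real^'m \<Rightarrow> real^'n" where "restr x = (\<chi> i. x $ e i)" for x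
  have T'_restr: "T' (vec_nth x) b = (if b \<in> range e then h (restr x) $ inv e b else x $ b)" for x b
    by (simp add: T'_def T_eq restr_def comp_def)
  have "linear restr"
    by (rule linearI) (simp_all add: restr_def vec_eq_iff)
  then have restr_lin: "linear (\<lambda>x. h (restr x))"
    using h_orth by (simp add: linear_compose[unfolded comp_def] orthogonal_transformation_linear)
  have "T' (vec_nth (x + y)) b = T' (vec_nth x) b + T' (vec_nth y) b" for x y b
    by (simp add: T'_restr linear_add[OF restr_lin])
  moreover have "T' (vec_nth (c *\<^sub>R x)) b = c * T' (vec_nth x) b" for c x b
    by (simp add: T'_restr linear_scale[OF restr_lin])
  ultimately have linear: "linear (\<lambda>x. vec_lambda (T' (vec_nth x)))"
    by (intro linearI) (simp_all add: vec_eq_iff)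
  have split: "(\<Sum>b\<in>UNIV. g b) = (\<Sum>i\<in>UNIV. g (e i)) + (\<Sum>b\<in>UNIV - range e. g b)"
    for g :: "'m \<Rightarrow> real"
  proof -
    have "(\<Sum>b\<in>UNIV. g b) = (\<Sum>b\<in>UNIV - range e. g b) + (\<Sum>b\<in>range e. g b)"
      by (rule sum.subset_diff) auto
    then show ?thesis
      using \<open>inj e\<close> by (simp add: sum.reindex)
  qed
  have "(norm (vec_lambda (T' (vec_nth x))))\<^sup>2 = (norm x)\<^sup>2" for x
  proof -
    have "(norm (vec_lambda (T' (vec_nth x))))\<^sup>2
        = (\<Sum>i\<in>UNIV. (h (restr x) $ i)\<^sup>2) + (\<Sum>b\<in>UNIV - range e. (x $ b)\<^sup>2)"
      unfolding power2_norm_real_vec vec_lambda_beta split[of "\<lambda>b. (T' (vec_nth x) b)\<^sup>2"]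
      using \<open>inj e\<close> by (simp add: T'_restr)
    also have "\<dots> = (\<Sum>i\<in>UNIV. (restr x $ i)\<^sup>2) + (\<Sum>b\<in>UNIV - range e. (x $ b)\<^sup>2)"
      by (simp only: power2_norm_real_vec[symmetric] orthogonal_transformation_norm[OF h_orth])
    also have "\<dots> = (norm x)\<^sup>2"
      unfolding power2_norm_real_vec split[of "\<lambda>b. (x $ b)\<^sup>2"] by (simp add: restr_def)
    finally show ?thesis .
  qed
  with linear show ?thesis
    by (simp add: orthogonal_transformation power2_eq_iff_nonneg)
qed

text \<open>The change of variables theorems of the library need a wellordered index type, so the
  index type is embedded into its double, T is extended by the identity on the complement,
  and the invariance is carried back along the marginal.\<close>

lemma std_gaussian_orthogonal_invariant:
  fixes T :: "('n::finite \<Rightarrow> real) \<Rightarrow> ('n \<Rightarrow> real)"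
  assumes orth: "orthogonal_transformation (\<lambda>x. vec_lambda (T (vec_nth x)))"
  shows "distr std_gaussian std_gaussian T = std_gaussian"
proof -
  have "card (UNIV :: 'n set) \<le> card (UNIV :: 'n bit0 set)"
    by simp
  then obtain e :: "'n \<Rightarrow> 'n bit0" where "inj e"
    using card_le_inj[of "UNIV :: 'n set" "UNIV :: 'n bit0 set"] by auto
  define T' :: "('n bit0 \<Rightarrow> real) \<Rightarrow> ('n bit0 \<Rightarrow> real)"
    where "T' f = (\<lambda>b. if b \<in> range e then T (f \<circ> e) (inv e b) else f b)" for f
  have orth': "orthogonal_transformation (\<lambda>x. vec_lambda (T' (vec_nth x)))"
    using orthogonal_transformation_extend_id[OF \<open>inj e\<close> orth] by (simp add: T'_def[abs_def])
  define restr :: "('n bit0 \<Rightarrow> real) \<Rightarrow> ('n \<Rightarrow> real)" where "restr f = f \<circ> e" for f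
  have restr_T': "restr (T' f) = T (restr f)" for f
    using \<open>inj e\<close> by (simp add: restr_def T'_def comp_def)
  have restr_distr: "distr std_gaussian std_gaussian restr = std_gaussian"
    using distr_PiM_reindex[of UNIV "\<lambda>_. std_normal_M" e UNIV] \<open>inj e\<close> prob_space_std_normal_M
    by (simp add: std_gaussian_def restr_def[abs_def] comp_def restrict_def)
  have restr_meas: "restr \<in> std_gaussian \<rightarrow>\<^sub>M std_gaussian"
    unfolding std_gaussian_def restr_def comp_def by (rule measurable_PiM_single') (auto simp: space_PiM)
  have T_meas: "T \<in> std_gaussian \<rightarrow>\<^sub>M std_gaussian"
    using orth by (intro measurable_std_gaussian_linear orthogonal_transformation_linear)
  have T'_meas: "T' \<in> std_gaussian \<rightarrow>\<^sub>M std_gaussian"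
    using orth' by (intro measurable_std_gaussian_linear orthogonal_transformation_linear)
  have "distr std_gaussian std_gaussian T = distr (distr std_gaussian std_gaussian restr) std_gaussian T"
    by (simp add: restr_distr)
  also have "\<dots> = distr (distr std_gaussian std_gaussian T') std_gaussian restr"
    using restr_meas T_meas T'_meas by (simp add: distr_distr comp_def restr_T')
  also have "\<dots> = std_gaussian"
    by (simp add: std_gaussian_orthogonal_invariant_wellorder[OF orth'] restr_distr)
  finally show ?thesis .
qed

section \<open>The regression model\<close>

type_synonym ('m, 'k, 's) noise_index = "('m \<times> 'k) + ('s \<times> 'k) + 'm + 's"

definition noise_VWx :: "(('m::finite, 'k::finite, 's::finite) noise_index \<Rightarrow> real) \<Rightarrow> real^'k^'m"
  where "noise_VWx \<omega> = (\<chi> i j. \<omega> (Inl (i, j)))"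

definition noise_VWperp :: "(('m::finite, 'k::finite, 's::finite) noise_index \<Rightarrow> real) \<Rightarrow> real^'k^'s"
  where "noise_VWperp \<omega> = (\<chi> i j. \<omega> (Inr (Inl (i, j))))"

definition noise_VYx :: "(('m::finite, 'k::finite, 's::finite) noise_index \<Rightarrow> real) \<Rightarrow> real^'m"
  where "noise_VYx \<omega> = (\<chi> i. \<omega> (Inr (Inr (Inl i))))"

definition noise_VYperp :: "(('m::finite, 'k::finite, 's::finite) noise_index \<Rightarrow> real) \<Rightarrow> real^'s"
  where "noise_VYperp \<omega> = (\<chi> i. \<omega> (Inr (Inr (Inr i))))"

lemma model_map_eq:
  "model_map \<sigma> SWh muW (\<mu>x, \<gamma>) \<omega> =
    (\<mu>x + (muW + noise_VWx \<omega> ** SWh) *v \<gamma> + \<sigma> *\<^sub>R noise_VYx \<omega>,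
     (noise_VWperp \<omega> ** SWh) *v \<gamma> + \<sigma> *\<^sub>R noise_VYperp \<omega>,
     muW + noise_VWx \<omega> ** SWh,
     noise_VWperp \<omega> ** SWh)"
  by (simp add: model_map_def Let_def noise_VWx_def noise_VWperp_def noise_VYx_def noise_VYperp_def)

text \<open>Since W* = V_W Sigma_W^(1/2) when mu_W = 0, the action
  w |-> g w Sigma_W^(-1/2) g_W' Sigma_W^(1/2) of g on W* corresponds to V_W |-> g V_W g_W' on the
  noise.\<close>

definition noise_action ::
  "real^'m^'m \<Rightarrow> real^'k^'k \<Rightarrow> real^'s^'s
   \<Rightarrow> (('m::finite, 'k::finite, 's::finite) noise_index \<Rightarrow> real)
   \<Rightarrow> (('m, 'k, 's) noise_index \<Rightarrow> real)" where
  "noise_action gx gW gp \<omega> = (\<lambda>a. case a of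
      Inl (i, j) \<Rightarrow> (gx ** noise_VWx \<omega> ** transpose gW) $ i $ j
    | Inr (Inl (i, j)) \<Rightarrow> (gp ** noise_VWperp \<omega> ** transpose gW) $ i $ j
    | Inr (Inr (Inl i)) \<Rightarrow> (gx *v noise_VYx \<omega>) $ i
    | Inr (Inr (Inr i)) \<Rightarrow> (gp *v noise_VYperp \<omega>) $ i)"

lemma noise_blocks_noise_action:
  "noise_VWx (noise_action gx gW gp \<omega>) = gx ** noise_VWx \<omega> ** transpose gW"
  "noise_VWperp (noise_action gx gW gp \<omega>) = gp ** noise_VWperp \<omega> ** transpose gW"
  "noise_VYx (noise_action gx gW gp \<omega>) = gx *v noise_VYx \<omega>"
  "noise_VYperp (noise_action gx gW gp \<omega>) = gp *v noise_VYperp \<omega>"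
  by (simp_all add: vec_eq_iff noise_action_def noise_VWx_def noise_VWperp_def noise_VYx_def noise_VYperp_def)

lemma linear_noise_action: "linear (\<lambda>x. vec_lambda (noise_action gx gW gp (vec_nth x)))"
proof -
  have VWx: "linear (\<lambda>x. noise_VWx (vec_nth x))" and VWperp: "linear (\<lambda>x. noise_VWperp (vec_nth x))"
    and VYx: "linear (\<lambda>x. noise_VYx (vec_nth x))" and VYperp: "linear (\<lambda>x. noise_VYperp (vec_nth x))"
    by (auto intro!: linearI simp: vec_eq_iff noise_VWx_def noise_VWperp_def noise_VYx_def noise_VYperp_def)
  show ?thesis
    by (rule linearI)
      (auto simp: vec_eq_iff noise_action_def linear_add[OF VWx] linear_add[OF VWperp]
        linear_add[OF VYx] linear_add[OF VYperp] linear_scale[OF VWx] linear_scale[OF VWperp]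
        linear_scale[OF VYx] linear_scale[OF VYperp] matrix_add_ldistrib matrix_add_rdistrib
        matrix_vector_right_distrib matrix_scalar_ac scalar_matrix_assoc[symmetric]
        matrix_vector_mult_scaleR split: sum.split)
qed

lemma power2_norm_noise:
  "(norm (vec_lambda \<omega>))\<^sup>2 = (norm (noise_VWx \<omega>))\<^sup>2 + (norm (noise_VWperp \<omega>))\<^sup>2
    + (norm (noise_VYx \<omega>))\<^sup>2 + (norm (noise_VYperp \<omega>))\<^sup>2"
  by (simp add: power2_norm_vec_Plus power2_norm_vec_prod noise_VWx_def noise_VWperp_def
      noise_VYx_def noise_VYperp_def)

lemma orthogonal_noise_action:
  assumes "orthogonal_matrix gx" "orthogonal_matrix gW" "orthogonal_matrix gp"
  shows "orthogonal_transformation (\<lambda>x. vec_lambda (noise_action gx gW gp (vec_nth x)))"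
proof -
  have "(norm (vec_lambda (noise_action gx gW gp (vec_nth x))))\<^sup>2 = (norm x)\<^sup>2" for x
    using power2_norm_noise[of "vec_nth x"] assms
    by (simp add: power2_norm_noise noise_blocks_noise_action norm_orthogonal_matrix_mult
        norm_matrix_mult_transpose_orthogonal norm_orthogonal_matrix_vector_mult)
  then show ?thesis
    by (simp add: orthogonal_transformation linear_noise_action power2_eq_iff_nonneg)
qed

lemma model_map_equivariant:
  assumes "invertible SWh" and "orthogonal_matrix gW"
  shows "m_Z SWh (g\<mu>, gx, gW, gp) (model_map \<sigma> SWh 0 \<theta> \<omega>)
       = model_map \<sigma> SWh 0 (m_Theta SWh (g\<mu>, gx, gW, gp) \<theta>) (noise_action gx gW gp \<omega>)"
proof -
  obtain \<mu>x \<gamma> where \<theta>: "\<theta> = (\<mu>x, \<gamma>)"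
    by (cases \<theta>)
  have cancel_SWh: "X ** SWh ** matrix_inv SWh = X" for X :: "real^_^'j::finite"
    using matrix_inv_right[OF assms(1)] by (simp flip: matrix_mul_assoc)
  have cancel_gW: "X ** transpose gW ** gW = X" for X :: "real^_^'j::finite"
    using assms(2) by (simp add: orthogonal_matrix flip: matrix_mul_assoc)
  show ?thesis
    by (simp add: \<theta> model_map_eq m_Z_def m_Theta_def noise_blocks_noise_action matrix_vector_mul_assoc
        matrix_mul_assoc cancel_SWh cancel_gW matrix_vector_right_distrib matrix_vector_mult_scaleR)
qed

lemma noise_M_eq_std_gaussian: "noise_M = std_gaussian"
  by (simp add: noise_M_def std_gaussian_def)

lemma measurable_model_map: "model_map \<sigma> SWh muW \<theta> \<in> noise_M \<rightarrow>\<^sub>M borel"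
proof -
  obtain \<mu>x \<gamma> where \<theta>: "\<theta> = (\<mu>x, \<gamma>)"
    by (cases \<theta>)
  let ?F = "\<lambda>v. model_map \<sigma> SWh muW \<theta> (vec_nth v)"
  have "continuous_on UNIV ?F"
    unfolding \<theta> model_map_eq noise_VWx_def noise_VWperp_def noise_VYx_def noise_VYperp_def
    by (intro continuous_intros)
  then have "?F \<in> borel_measurable borel"
    by (rule borel_measurable_continuous_onI)
  moreover have "vec_lambda \<in> borel_measurable noise_M"
    unfolding noise_M_def by (rule measurable_vec_lambda_PiM) simp
  ultimately have "(\<lambda>\<omega>. ?F (vec_lambda \<omega>)) \<in> noise_M \<rightarrow>\<^sub>M borel"
    using measurable_comp by (simp add: comp_def)
  then show ?thesis
    by (simp add: vec_lambda_inverse)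
qed

lemma measurable_m_Z: "m_Z SWh g \<in> borel_measurable borel"
proof -
  obtain g\<mu> gx gW gp where "g = (g\<mu>, gx, gW, gp)"
    by (cases g)
  then have "m_Z SWh g = (\<lambda>z. (gx *v fst z + g\<mu>, gp *v fst (snd z),
      gx ** fst (snd (snd z)) ** matrix_inv SWh ** transpose gW ** SWh,
      gp ** snd (snd (snd z)) ** matrix_inv SWh ** transpose gW ** SWh))"
    by (simp add: fun_eq_iff m_Z_def case_prod_beta)
  moreover have "continuous_on UNIV \<dots>"
    by (intro continuous_intros)
  ultimately show ?thesis
    by (simp add: borel_measurable_continuous_onI)
qed

lemma model_P_invariant:
  assumes "invertible SWh" and "in_G g"
  shows "distr (model_P \<sigma> SWh 0 \<theta>) borel (m_Z SWh g) = model_P \<sigma> SWh 0 (m_Theta SWh g \<theta>)"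
proof -
  obtain g\<mu> gx gW gp where g: "g = (g\<mu>, gx, gW, gp)"
    by (cases g)
  have orth: "orthogonal_matrix gx" "orthogonal_matrix gW" "orthogonal_matrix gp"
    using assms(2) by (simp_all add: in_G_def g)
  note orth_action = orthogonal_noise_action[OF orth]
  have action_meas: "noise_action gx gW gp \<in> noise_M \<rightarrow>\<^sub>M noise_M"
    unfolding noise_M_eq_std_gaussian
    using orth_action by (intro measurable_std_gaussian_linear orthogonal_transformation_linear)
  have "distr (model_P \<sigma> SWh 0 \<theta>) borel (m_Z SWh g)
      = distr noise_M borel (\<lambda>\<omega>. m_Z SWh g (model_map \<sigma> SWh 0 \<theta> \<omega>))"
    unfolding model_P_def by (simp add: distr_distr[OF measurable_m_Z measurable_model_map] comp_def)
  also have "\<dots> = distr noise_M borel (\<lambda>\<omega>. model_map \<sigma> SWh 0 (m_Theta SWh g \<theta>) (noise_action gx gW gp \<omega>))"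
    unfolding g model_map_equivariant[OF assms(1) orth(2)] ..
  also have "\<dots> = distr (distr noise_M noise_M (noise_action gx gW gp)) borel (model_map \<sigma> SWh 0 (m_Theta SWh g \<theta>))"
    by (simp add: distr_distr[OF measurable_model_map action_meas] comp_def)
  also have "\<dots> = model_P \<sigma> SWh 0 (m_Theta SWh g \<theta>)"
    by (simp add: model_P_def noise_M_eq_std_gaussian std_gaussian_orthogonal_invariant[OF orth_action])
  finally show ?thesis .
qed

lemma loss_invariant:
  assumes "in_G g"
  shows "loss (m_Theta SWh g \<theta>) (m_A g a) = loss \<theta> a"
proof -
  obtain g\<mu> gx gW gp where g: "g = (g\<mu>, gx, gW, gp)"
    by (cases g)
  obtain \<mu>x \<gamma> where \<theta>: "\<theta> = (\<mu>x, \<gamma>)"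
    by (cases \<theta>)
  have "gx *v \<mu>x + g\<mu> - (gx *v a + g\<mu>) = gx *v (\<mu>x - a)"
    by (simp add: matrix_vector_mult_diff_distrib)
  moreover have "orthogonal_matrix gx"
    using assms by (simp add: in_G_def g)
  ultimately show ?thesis
    by (simp add: loss_def m_Theta_def m_A_def g \<theta> norm_orthogonal_matrix_vector_mult)
qed

theorem mainTheorem5:
  fixes \<sigma> :: real
    and SW SWh :: "(real^'k::finite^'k)"
    and muW :: "(real^'k^'m::finite)"
  assumes "\<sigma> > 0"
    and "pos_def_matrix SW"
    and "pos_def_matrix SWh"
    and "SWh ** SWh = SW"
    and "muW = 0"
  shows "(\<forall>g \<theta>. in_G (g :: (real^'m) \<times> (real^'m^'m) \<times> (real^'k^'k) \<times> (real^'s::finite^'s)) \<longrightarrow>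
            distr (model_P \<sigma> SWh muW \<theta>) borel (m_Z SWh g)
              = model_P \<sigma> SWh muW (m_Theta SWh g \<theta>))
       \<and> (\<forall>g \<theta> a. in_G (g :: (real^'m) \<times> (real^'m^'m) \<times> (real^'k^'k) \<times> (real^'s^'s)) \<longrightarrow>
            loss (m_Theta SWh g \<theta>) (m_A g a) = loss \<theta> a)"
  using model_P_invariant[OF pos_def_matrix_invertible[OF assms(3)]] loss_invariant
  unfolding assms(5) by blast

end
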